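(* Let $\Lambda$ be a finite non-uniform rectangular grid. Then there exists a plane geometric graph on the set of vertices of $\Lambda$ whose maximum vertex degree is at most $3$ and whose stretch factor is at most $3\sqrt{2}$.
   Context: A finite non-uniform $m\times k$ rectangular grid $\Lambda$ has as vertices the $mk$ intersection points of $m$ horizontal lines and $k$ vertical lines, where the spacings between consecutive horizontal lines and between consecutive vertical lines are arbitrary. A geometric graph has straight-segment edges weighted by Euclidean length; its stretch factor is the smallest $t$ such that the shortest-path distance between any two vertices $u,v$ is at most $t|uv|$. A graph is plane if no two edges cross. *)

theory Defs
  imports "HOL-Analysis.Analysis"
begin

type_synonym point = "real \<times> real"

text \<open>Vertex set of the non-uniform grid given by the x-coordinates X of the
vertical lines and the y-coordinates Y of the horizontal lines.
The metric on real \<times> real is the Euclidean one.\<close>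
definition grid_vertices :: "real set \<Rightarrow> real set \<Rightarrow> point set" where
  "grid_vertices X Y = X \<times> Y"

definition geometric_graph :: "point set \<Rightarrow> point set set \<Rightarrow> bool" where
  "geometric_graph V E \<longleftrightarrow> (\<forall>e\<in>E. \<exists>u v. u \<in> V \<and> v \<in> V \<and> u \<noteq> v \<and> e = {u, v})"

definition edge_segment :: "point set \<Rightarrow> point set" where
  "edge_segment e = (\<Union>u\<in>e. \<Union>v\<in>e. closed_segment u v)"

definition plane :: "point set set \<Rightarrow> bool" where
  "plane E \<longleftrightarrow> (\<forall>e1\<in>E. \<forall>e2\<in>E. e1 \<noteq> e2 \<longrightarrow> edge_segment e1 \<inter> edge_segment e2 \<subseteq> e1 \<inter> e2)"

definition degree :: "point set set \<Rightarrow> point \<Rightarrow> nat" where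
  "degree E v = card {e\<in>E. v \<in> e}"

definition max_degree_le :: "point set \<Rightarrow> point set set \<Rightarrow> nat \<Rightarrow> bool" where
  "max_degree_le V E d \<longleftrightarrow> (\<forall>v\<in>V. degree E v \<le> d)"

definition is_path :: "point set set \<Rightarrow> point list \<Rightarrow> point \<Rightarrow> point \<Rightarrow> bool" where
  "is_path E p u v \<longleftrightarrow> p \<noteq> [] \<and> hd p = u \<and> last p = v \<and>
     (\<forall>i. Suc i < length p \<longrightarrow> {p ! i, p ! Suc i} \<in> E)"

definition path_length :: "point list \<Rightarrow> real" where
  "path_length p = (\<Sum>i<length p - 1. dist (p ! i) (p ! Suc i))"

text \<open>Shortest-path distance in the edge-weighted graph (infinite if disconnected).\<close>
definition graph_dist :: "point set set \<Rightarrow> point \<Rightarrow> point \<Rightarrow> ereal" where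
  "graph_dist E u v = (INF p \<in> {p. is_path E p u v}. ereal (path_length p))"

definition stretch_le :: "point set \<Rightarrow> point set set \<Rightarrow> real \<Rightarrow> bool" where
  "stretch_le V E t \<longleftrightarrow> (\<forall>u\<in>V. \<forall>v\<in>V. graph_dist E u v \<le> ereal (t * dist u v))"

end

theory Submission
  imports Defs
begin

text \<open>Call a grid edge odd if its lower-left endpoint has odd index sum. Delete every odd edge except
  for a matching chosen greedily by increasing length, so that every deleted edge shares an endpoint
  with a matched edge that is not longer. At an odd vertex both outgoing edges, at an even vertex both
  incoming edges are odd, and at most one of them survives; hence every degree is at most 3. The
  result is a subgraph of the grid and thus plane. A deleted edge and its matched neighbour are two
  sides of a grid cell whose other two sides start at a vertex of even index sum and survive, so the
  detour around the cell costs at most three times the deleted edge. With every grid edge stretched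
  by at most 3, an L-shaped grid path gives 3 (|dx| + |dy|) \<le> 3 sqrt 2 |uv|.\<close>

lemma greedy_matching_exists:
  fixes M :: "'e set" and R :: "'e \<Rightarrow> 'e \<Rightarrow> bool" and w :: "'e \<Rightarrow> 'w::linorder"
  assumes "finite M" and refl: "\<And>e. R e e" and sym: "\<And>e f. R e f \<Longrightarrow> R f e"
  shows "\<exists>K\<subseteq>M. (\<forall>e\<in>K. \<forall>f\<in>K. R e f \<longrightarrow> e = f) \<and> (\<forall>e\<in>M - K. \<exists>f\<in>K. R e f \<and> w f \<le> w e)"
  using assms(1)
proof (induction M rule: finite_psubset_induct)
  case (psubset M)
  show ?case
  proof (cases "M = {}")
    case True
    then show ?thesis by auto
  next
    case False
    define e0 where "e0 = arg_min_on w M"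
    have e0: "e0 \<in> M" "\<forall>e\<in>M. w e0 \<le> w e"
      using arg_min_if_finite[OF psubset.hyps False, of w] unfolding e0_def by (auto simp: not_less)
    define M' where "M' = {e\<in>M. \<not> R e e0}"
    have "M' \<subset> M"
      using e0(1) refl[of e0] unfolding M'_def by blast
    from psubset.IH[OF this] obtain K' where K': "K' \<subseteq> M'"
        "\<forall>e\<in>K'. \<forall>f\<in>K'. R e f \<longrightarrow> e = f" "\<forall>e\<in>M' - K'. \<exists>f\<in>K'. R e f \<and> w f \<le> w e"
      by (elim exE conjE)
    have "\<not> R e0 f" "\<not> R f e0" if "f \<in> K'" for f
      using that K'(1) sym unfolding M'_def by auto
    then have "\<forall>e\<in>insert e0 K'. \<forall>f\<in>insert e0 K'. R e f \<longrightarrow> e = f"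
      using K'(2) by auto
    moreover have "\<forall>e\<in>M - insert e0 K'. \<exists>f\<in>insert e0 K'. R e f \<and> w f \<le> w e"
      using K'(3) e0(2) unfolding M'_def by auto
    moreover have "insert e0 K' \<subseteq> M" using K'(1) e0(1) unfolding M'_def by auto
    ultimately show ?thesis by blast
  qed
qed

inductive walk :: "point set set \<Rightarrow> point \<Rightarrow> point \<Rightarrow> real \<Rightarrow> bool" for E where
  walk_Nil: "walk E u u 0"
| walk_Cons: "{u, v} \<in> E \<Longrightarrow> walk E v w c \<Longrightarrow> walk E u w (dist u v + c)"

lemma walk_append: "walk E u v a \<Longrightarrow> walk E v w b \<Longrightarrow> walk E u w (a + b)"
proof (induction rule: walk.induct)
  case (walk_Cons u v w c)
  from walk.walk_Cons[OF walk_Cons.hyps(1) walk_Cons.IH[OF walk_Cons.prems]]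
  show ?case by (simp add: add.assoc)
qed simp

lemma walk_edge: "{u, v} \<in> E \<Longrightarrow> walk E u v (dist u v)"
  using walk_Cons[OF _ walk_Nil, of u v E] by simp

lemma walk_sym: "walk E u v c \<Longrightarrow> walk E v u c"
proof (induction rule: walk.induct)
  case (walk_Cons u v w c)
  then have "walk E v u (dist v u)" by (simp add: walk_edge insert_commute)
  from walk_append[OF walk_Cons.IH this] show ?case by (simp add: add.commute dist_commute)
qed (rule walk_Nil)

lemma path_length_Cons: "p \<noteq> [] \<Longrightarrow> path_length (u # p) = dist u (hd p) + path_length p"
proof -
  assume "p \<noteq> []"
  then obtain n where n: "length p = Suc n" by (cases p) auto
  have "path_length (u # p) = (\<Sum>i<Suc n. dist ((u # p) ! i) ((u # p) ! Suc i))"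
    unfolding path_length_def using n by simp
  also have "\<dots> = dist u (p ! 0) + (\<Sum>i<n. dist (p ! i) (p ! Suc i))"
    by (subst sum.lessThan_Suc_shift) simp
  finally show ?thesis
    using n \<open>p \<noteq> []\<close> by (simp add: path_length_def hd_conv_nth)
qed

lemma walk_imp_path: "walk E u v c \<Longrightarrow> \<exists>p. is_path E p u v \<and> path_length p = c"
proof (induction rule: walk.induct)
  case (walk_Nil u)
  show ?case by (rule exI[of _ "[u]"]) (simp add: is_path_def path_length_def)
next
  case (walk_Cons u v w c)
  then obtain p where p: "is_path E p v w" "path_length p = c" by blast
  then have "p \<noteq> []" "hd p = v" by (auto simp: is_path_def)
  have "is_path E (u # p) u w"
    unfolding is_path_def
  proof (intro conjI allI impI)
    show "last (u # p) = w" using p(1) \<open>p \<noteq> []\<close> by (simp add: is_path_def)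
    fix i assume i: "Suc i < length (u # p)"
    show "{(u # p) ! i, (u # p) ! Suc i} \<in> E"
    proof (cases i)
      case 0
      then show ?thesis using walk_Cons.hyps \<open>p \<noteq> []\<close> \<open>hd p = v\<close> by (simp add: hd_conv_nth)
    next
      case (Suc i')
      then show ?thesis using p(1) i by (simp add: is_path_def)
    qed
  qed simp_all
  moreover have "path_length (u # p) = dist u v + c"
    using path_length_Cons[OF \<open>p \<noteq> []\<close>] \<open>hd p = v\<close> p(2) by simp
  ultimately show ?case by blast
qed

definition reach :: "point set set \<Rightarrow> point \<Rightarrow> point \<Rightarrow> real \<Rightarrow> bool" where
  "reach E u v b \<longleftrightarrow> (\<exists>c\<le>b. walk E u v c)"

lemma reach_refl: "reach E u u 0"
  unfolding reach_def using walk_Nil by blast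

lemma reach_trans: "reach E u v a \<Longrightarrow> reach E v w b \<Longrightarrow> reach E u w (a + b)"
  unfolding reach_def by (meson add_mono walk_append)

lemma reach_sym: "reach E u v a \<Longrightarrow> reach E v u a"
  unfolding reach_def using walk_sym by blast

lemma reach_mono: "reach E u v a \<Longrightarrow> a \<le> b \<Longrightarrow> reach E u v b"
  unfolding reach_def by (meson order_trans)

lemma reach_trans3:
  "reach E a b p \<Longrightarrow> reach E b c q \<Longrightarrow> reach E c d r \<Longrightarrow> p + q + r \<le> s \<Longrightarrow> reach E a d s"
  by (meson reach_trans reach_mono)

lemma reach_edge: "{u, v} \<in> E \<Longrightarrow> reach E u v (dist u v)"
  unfolding reach_def using walk_edge by blast

lemma graph_dist_le_reach: "reach E u v b \<Longrightarrow> graph_dist E u v \<le> ereal b"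
proof -
  assume "reach E u v b"
  then obtain p where p: "is_path E p u v" "path_length p \<le> b"
    unfolding reach_def using walk_imp_path by blast
  then have "graph_dist E u v \<le> ereal (path_length p)"
    unfolding graph_dist_def by (intro INF_lower) simp
  with p(2) show ?thesis by (meson ereal_less_eq(3) order_trans)
qed

lemma reach_along_chain:
  fixes p :: "nat \<Rightarrow> point" and g :: "nat \<Rightarrow> real"
  assumes step: "\<And>n. Suc n < N \<Longrightarrow> reach E (p n) (p (Suc n)) (c * (g (Suc n) - g n))"
    and mono: "mono_on {..<N} g" and "a < N" "b < N"
  shows "reach E (p a) (p b) (c * \<bar>g b - g a\<bar>)"
proof -
  have up: "reach E (p a) (p b) (c * (g b - g a))" if "a \<le> b" "b < N" for a b
    using that
  proof (induction b)
    case (Suc b)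
    show ?case
    proof (cases "a = Suc b")
      case False
      with Suc have "reach E (p a) (p b) (c * (g b - g a))" by simp
      moreover have "reach E (p b) (p (Suc b)) (c * (g (Suc b) - g b))"
        using Suc.prems by (intro step)
      ultimately have "reach E (p a) (p (Suc b)) (c * (g b - g a) + c * (g (Suc b) - g b))"
        by (rule reach_trans)
      then show ?thesis by (simp add: algebra_simps)
    qed (simp add: reach_refl)
  qed (simp add: reach_refl)
  show ?thesis
  proof (cases "a \<le> b")
    case True
    then show ?thesis using up assms mono_onD[OF mono] by simp
  next
    case False
    then show ?thesis using up[of b a] assms mono_onD[OF mono, of b a] by (simp add: reach_sym)
  qed
qed

lemma edge_segment_pair: "edge_segment {a, b} = closed_segment a b"
  unfolding edge_segment_def by (auto simp: closed_segment_commute[of b a])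

lemma plane_subset: "plane E \<Longrightarrow> E' \<subseteq> E \<Longrightarrow> plane E'"
  unfolding plane_def by blast

lemma geometric_graph_subset: "geometric_graph V E \<Longrightarrow> E' \<subseteq> E \<Longrightarrow> geometric_graph V E'"
  unfolding geometric_graph_def by blast

datatype grid_edge = Hor nat nat | Ver nat nat

fun tail :: "grid_edge \<Rightarrow> nat \<times> nat" where
  "tail (Hor i j) = (i, j)"
| "tail (Ver i j) = (i, j)"

fun head :: "grid_edge \<Rightarrow> nat \<times> nat" where
  "head (Hor i j) = (Suc i, j)"
| "head (Ver i j) = (i, Suc j)"

definition ends :: "grid_edge \<Rightarrow> (nat \<times> nat) set" where
  "ends t = {tail t, head t}"

definition meets :: "grid_edge \<Rightarrow> grid_edge \<Rightarrow> bool" where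
  "meets t f \<longleftrightarrow> ends t \<inter> ends f \<noteq> {}"

definition grid_edges :: "nat \<Rightarrow> nat \<Rightarrow> grid_edge set" where
  "grid_edges k m = {t. fst (head t) < k \<and> snd (head t) < m}"

definition odd_vertex :: "nat \<times> nat \<Rightarrow> bool" where
  "odd_vertex p \<longleftrightarrow> odd (fst p + snd p)"

definition odd_edges :: "nat \<Rightarrow> nat \<Rightarrow> grid_edge set" where
  "odd_edges k m = {t \<in> grid_edges k m. odd_vertex (tail t)}"

lemma Hor_in_grid_edges [simp]: "Hor i j \<in> grid_edges k m \<longleftrightarrow> Suc i < k \<and> j < m"
  by (simp add: grid_edges_def)

lemma Ver_in_grid_edges [simp]: "Ver i j \<in> grid_edges k m \<longleftrightarrow> i < k \<and> Suc j < m"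
  by (simp add: grid_edges_def)

lemma ends_in_grid:
  assumes "t \<in> grid_edges k m" and "p \<in> ends t"
  shows "p \<in> {..<k} \<times> {..<m}"
  using assms by (cases t) (auto simp: ends_def)

lemma finite_grid_edges: "finite (grid_edges k m)"
proof -
  have "grid_edges k m \<subseteq> case_prod Hor ` ({..<k} \<times> {..<m}) \<union> case_prod Ver ` ({..<k} \<times> {..<m})"
  proof
    fix t assume "t \<in> grid_edges k m"
    then show "t \<in> case_prod Hor ` ({..<k} \<times> {..<m}) \<union> case_prod Ver ` ({..<k} \<times> {..<m})"
      by (cases t) force+
  qed
  then show ?thesis by (rule finite_subset) simp
qed

lemma odd_vertex_head: "odd_vertex (head t) \<longleftrightarrow> \<not> odd_vertex (tail t)"
  by (cases t) (simp_all add: odd_vertex_def)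

lemma card_tail_eq_le_2: "card {t \<in> A. tail t = p} \<le> 2"
proof -
  have "{t \<in> A. tail t = p} \<subseteq> {Hor (fst p) (snd p), Ver (fst p) (snd p)}"
  proof
    fix t assume "t \<in> {t \<in> A. tail t = p}"
    then show "t \<in> {Hor (fst p) (snd p), Ver (fst p) (snd p)}" by (cases t) auto
  qed
  then have "card {t \<in> A. tail t = p} \<le> card {Hor (fst p) (snd p), Ver (fst p) (snd p)}"
    by (intro card_mono) simp_all
  then show ?thesis by (simp add: card_insert_if)
qed

lemma card_head_eq_le_2: "card {t \<in> A. head t = p} \<le> 2"
proof -
  have "{t \<in> A. head t = p} \<subseteq> {Hor (fst p - 1) (snd p), Ver (fst p) (snd p - 1)}"
  proof
    fix t assume "t \<in> {t \<in> A. head t = p}"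
    then show "t \<in> {Hor (fst p - 1) (snd p), Ver (fst p) (snd p - 1)}" by (cases t) auto
  qed
  then have "card {t \<in> A. head t = p} \<le> card {Hor (fst p - 1) (snd p), Ver (fst p) (snd p - 1)}"
    by (intro card_mono) simp_all
  then show ?thesis by (simp add: card_insert_if)
qed

lemma meets_refl: "meets t t"
  by (simp add: meets_def ends_def)

lemma meets_sym: "meets t f \<Longrightarrow> meets f t"
  by (auto simp: meets_def)

text \<open>Odd edges point away from their odd endpoint, so two of them can only share their tails or
  their heads.\<close>

lemma odd_edges_meet_cases:
  assumes "t \<in> odd_edges k m" "f \<in> odd_edges k m" "t \<noteq> f" "meets t f"
  obtains i j where "t = Hor i j" "f = Ver i j"
    | i j where "t = Hor i (Suc j)" "f = Ver (Suc i) j"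
    | i j where "t = Ver i j" "f = Hor i j"
    | i j where "t = Ver (Suc i) j" "f = Hor i (Suc j)"
proof -
  have "odd_vertex (tail t)" "odd_vertex (tail f)"
    using assms(1,2) by (simp_all add: odd_edges_def)
  then have "tail t = tail f \<or> head t = head f"
    using assms(4) odd_vertex_head[of t] odd_vertex_head[of f] unfolding meets_def ends_def by auto
  with assms(3) that show thesis
    by (cases t; cases f) auto
qed

lemma strict_mono_on_adjacent_intervals_meet:
  fixes f :: "nat \<Rightarrow> real"
  assumes mono: "strict_mono_on {..<N} f" and "Suc i < N" "Suc i' < N" "i \<noteq> i'"
    and "a \<in> {f i..f (Suc i)}" "a \<in> {f i'..f (Suc i')}"
  shows "a \<in> {f i, f (Suc i)} \<inter> {f i', f (Suc i')}"
proof -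
  have *: "a \<in> {f i, f (Suc i)} \<inter> {f i', f (Suc i')}"
    if "i < i'" "Suc i' < N" "a \<in> {f i..f (Suc i)}" "a \<in> {f i'..f (Suc i')}" for i i'
  proof -
    have "f (Suc i) \<le> f i'" using that by (intro strict_mono_on_leD[OF mono]) auto
    with that have "a = f (Suc i)" "a = f i'" by auto
    then show ?thesis by simp
  qed
  show ?thesis using *[of i i'] *[of i' i] assms(2-) by (cases "i < i'") auto
qed

lemma strict_mono_on_between_adjacent:
  fixes f :: "nat \<Rightarrow> real"
  assumes mono: "strict_mono_on {..<N} f" and "Suc i < N" "n < N" "f n \<in> {f i..f (Suc i)}"
  shows "n = i \<or> n = Suc i"
  using assms strict_mono_on_less_eq[OF mono, of i n] strict_mono_on_less_eq[OF mono, of n "Suc i"]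
  by auto

locale grid =
  fixes x y :: "nat \<Rightarrow> real" and k m :: nat
  assumes strict_mono_x: "strict_mono_on {..<k} x"
    and strict_mono_y: "strict_mono_on {..<m} y"
begin

abbreviation V :: "point set" where
  "V \<equiv> grid_vertices (x ` {..<k}) (y ` {..<m})"

definition pt :: "nat \<times> nat \<Rightarrow> point" where
  "pt p = (x (fst p), y (snd p))"

definition geom_edge :: "grid_edge \<Rightarrow> point set" where
  "geom_edge t = {pt (tail t), pt (head t)}"

definition edge_length :: "grid_edge \<Rightarrow> real" where
  "edge_length t = dist (pt (tail t)) (pt (head t))"

lemma V_eq_pt_image: "V = pt ` ({..<k} \<times> {..<m})"
proof -
  have "pt = (\<lambda>(i, j). (x i, y j))" by (auto simp: pt_def)
  then show ?thesis by (simp add: grid_vertices_def image_paired_Times)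
qed

lemma pt_in_V: "p \<in> {..<k} \<times> {..<m} \<Longrightarrow> pt p \<in> V"
  unfolding V_eq_pt_image by (rule imageI)

lemma pt_inj: "p \<in> {..<k} \<times> {..<m} \<Longrightarrow> q \<in> {..<k} \<times> {..<m} \<Longrightarrow> pt p = pt q \<Longrightarrow> p = q"
proof -
  assume p: "p \<in> {..<k} \<times> {..<m}" and q: "q \<in> {..<k} \<times> {..<m}" and "pt p = pt q"
  then have "x (fst p) = x (fst q)" "y (snd p) = y (snd q)" by (simp_all add: pt_def)
  with p q have "fst q = fst p" "snd q = snd p"
    by (auto intro: strict_mono_on_eqD[OF strict_mono_x] strict_mono_on_eqD[OF strict_mono_y])
  then show "p = q" by (simp add: prod_eq_iff)
qed

lemma edge_length_Hor [simp]: "edge_length (Hor i j) = \<bar>x (Suc i) - x i\<bar>"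
  by (simp add: edge_length_def pt_def dist_Pair_Pair dist_real_def abs_minus_commute)

lemma edge_length_Ver [simp]: "edge_length (Ver i j) = \<bar>y (Suc j) - y j\<bar>"
  by (simp add: edge_length_def pt_def dist_Pair_Pair dist_real_def abs_minus_commute)

lemma x_le_Suc: "Suc i < k \<Longrightarrow> x i \<le> x (Suc i)"
  by (simp add: strict_mono_on_leD[OF strict_mono_x])

lemma y_le_Suc: "Suc j < m \<Longrightarrow> y j \<le> y (Suc j)"
  by (simp add: strict_mono_on_leD[OF strict_mono_y])

lemma geometric_graph_grid: "geometric_graph V (geom_edge ` grid_edges k m)"
  unfolding geometric_graph_def
proof
  fix e assume "e \<in> geom_edge ` grid_edges k m"
  then obtain t where t: "t \<in> grid_edges k m" "e = geom_edge t" by blast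
  have ends: "tail t \<in> {..<k} \<times> {..<m}" "head t \<in> {..<k} \<times> {..<m}"
    using ends_in_grid[OF t(1)] by (simp_all add: ends_def)
  moreover have "tail t \<noteq> head t" by (cases t) simp_all
  ultimately have "pt (tail t) \<noteq> pt (head t)" using pt_inj[OF ends] by auto
  with ends t(2) show "\<exists>u v. u \<in> V \<and> v \<in> V \<and> u \<noteq> v \<and> e = {u, v}"
    unfolding geom_edge_def by (intro exI[of _ "pt (tail t)"] exI[of _ "pt (head t)"]) (simp add: pt_in_V)
qed

lemma mem_edge_segment_Hor:
  assumes "Hor i j \<in> grid_edges k m" "z \<in> edge_segment (geom_edge (Hor i j))"
  shows "snd z = y j \<and> fst z \<in> {x i..x (Suc i)}"
proof -
  have "(fst z, snd z) \<in> closed_segment (x i, y j) (x (Suc i), y j)"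
    using assms(2) by (simp add: geom_edge_def pt_def edge_segment_pair)
  from closed_segment_PairD[OF this] x_le_Suc[of i] assms(1) show ?thesis
    by (simp add: closed_segment_eq_real_ivl)
qed

lemma mem_edge_segment_Ver:
  assumes "Ver i j \<in> grid_edges k m" "z \<in> edge_segment (geom_edge (Ver i j))"
  shows "fst z = x i \<and> snd z \<in> {y j..y (Suc j)}"
proof -
  have "(fst z, snd z) \<in> closed_segment (x i, y j) (x i, y (Suc j))"
    using assms(2) by (simp add: geom_edge_def pt_def edge_segment_pair)
  from closed_segment_PairD[OF this] y_le_Suc[of j] assms(1) show ?thesis
    by (simp add: closed_segment_eq_real_ivl)
qed

lemma Hor_Hor_meet_at_ends:
  assumes "Hor i j \<in> grid_edges k m" "Hor i' j' \<in> grid_edges k m" "Hor i j \<noteq> Hor i' j'"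
    and "z \<in> edge_segment (geom_edge (Hor i j))" "z \<in> edge_segment (geom_edge (Hor i' j'))"
  shows "z \<in> geom_edge (Hor i j) \<inter> geom_edge (Hor i' j')"
proof -
  note z = mem_edge_segment_Hor[OF assms(1,4)] mem_edge_segment_Hor[OF assms(2,5)]
  have "j' = j" using z assms(1,2) strict_mono_on_eqD[OF strict_mono_y, of j j'] by auto
  with assms(3) have "i \<noteq> i'" by auto
  with z assms(1,2) have "fst z \<in> {x i, x (Suc i)} \<inter> {x i', x (Suc i')}"
    by (intro strict_mono_on_adjacent_intervals_meet[OF strict_mono_x]) auto
  with z \<open>j' = j\<close> show ?thesis by (auto simp: geom_edge_def pt_def prod_eq_iff)
qed

lemma Ver_Ver_meet_at_ends:
  assumes "Ver i j \<in> grid_edges k m" "Ver i' j' \<in> grid_edges k m" "Ver i j \<noteq> Ver i' j'"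
    and "z \<in> edge_segment (geom_edge (Ver i j))" "z \<in> edge_segment (geom_edge (Ver i' j'))"
  shows "z \<in> geom_edge (Ver i j) \<inter> geom_edge (Ver i' j')"
proof -
  note z = mem_edge_segment_Ver[OF assms(1,4)] mem_edge_segment_Ver[OF assms(2,5)]
  have "i' = i" using z assms(1,2) strict_mono_on_eqD[OF strict_mono_x, of i i'] by auto
  with assms(3) have "j \<noteq> j'" by auto
  with z assms(1,2) have "snd z \<in> {y j, y (Suc j)} \<inter> {y j', y (Suc j')}"
    by (intro strict_mono_on_adjacent_intervals_meet[OF strict_mono_y]) auto
  with z \<open>i' = i\<close> show ?thesis by (auto simp: geom_edge_def pt_def prod_eq_iff)
qed

lemma Hor_Ver_meet_at_ends:
  assumes "Hor i j \<in> grid_edges k m" "Ver i' j' \<in> grid_edges k m"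
    and "z \<in> edge_segment (geom_edge (Hor i j))" "z \<in> edge_segment (geom_edge (Ver i' j'))"
  shows "z \<in> geom_edge (Hor i j) \<inter> geom_edge (Ver i' j')"
proof -
  note z = mem_edge_segment_Hor[OF assms(1,3)] mem_edge_segment_Ver[OF assms(2,4)]
  have "i' = i \<or> i' = Suc i"
    using z assms(1,2) by (intro strict_mono_on_between_adjacent[OF strict_mono_x]) auto
  moreover have "j = j' \<or> j = Suc j'"
    using z assms(1,2) by (intro strict_mono_on_between_adjacent[OF strict_mono_y]) auto
  ultimately show ?thesis using z by (auto simp: geom_edge_def pt_def prod_eq_iff)
qed

lemma grid_segments_meet_at_ends:
  assumes "t1 \<in> grid_edges k m" "t2 \<in> grid_edges k m" "t1 \<noteq> t2"
    and "z \<in> edge_segment (geom_edge t1)" "z \<in> edge_segment (geom_edge t2)"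
  shows "z \<in> geom_edge t1 \<inter> geom_edge t2"
proof (cases t1)
  case t1: (Hor i j)
  show ?thesis
  proof (cases t2)
    case (Hor i' j')
    with t1 assms show ?thesis using Hor_Hor_meet_at_ends[of i j i' j' z] by simp
  next
    case (Ver i' j')
    with t1 assms show ?thesis using Hor_Ver_meet_at_ends[of i j i' j' z] by simp
  qed
next
  case t1: (Ver i j)
  show ?thesis
  proof (cases t2)
    case (Hor i' j')
    with t1 assms show ?thesis using Hor_Ver_meet_at_ends[of i' j' i j z] by auto
  next
    case (Ver i' j')
    with t1 assms show ?thesis using Ver_Ver_meet_at_ends[of i j i' j' z] by simp
  qed
qed

lemma plane_grid: "plane (geom_edge ` grid_edges k m)"
  unfolding plane_def using grid_segments_meet_at_ends by blast

lemma stretch_le_of_edge_stretch: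
  assumes "0 \<le> c"
    and edge: "\<And>t. t \<in> grid_edges k m \<Longrightarrow> reach E (pt (tail t)) (pt (head t)) (c * edge_length t)"
  shows "stretch_le V E (c * sqrt 2)"
  unfolding stretch_le_def V_eq_pt_image
proof (intro ballI)
  fix u v assume "u \<in> pt ` ({..<k} \<times> {..<m})" "v \<in> pt ` ({..<k} \<times> {..<m})"
  then obtain i j i' j' where ij: "i < k" "j < m" "i' < k" "j' < m"
    and uv: "u = pt (i, j)" "v = pt (i', j')" by auto
  have "reach E (pt (n, j)) (pt (Suc n, j)) (c * (x (Suc n) - x n))" if "Suc n < k" for n
    using edge[of "Hor n j"] that ij x_le_Suc[OF that] by simp
  then have row: "reach E (pt (i, j)) (pt (i', j)) (c * \<bar>x i' - x i\<bar>)"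
    by (rule reach_along_chain[where p = "\<lambda>n. pt (n, j)"])
      (use ij strict_mono_on_imp_mono_on[OF strict_mono_x] in auto)
  have "reach E (pt (i', n)) (pt (i', Suc n)) (c * (y (Suc n) - y n))" if "Suc n < m" for n
    using edge[of "Ver i' n"] that ij y_le_Suc[OF that] by simp
  then have column: "reach E (pt (i', j)) (pt (i', j')) (c * \<bar>y j' - y j\<bar>)"
    by (rule reach_along_chain[where p = "\<lambda>n. pt (i', n)"])
      (use ij strict_mono_on_imp_mono_on[OF strict_mono_y] in auto)
  have "\<bar>x i' - x i\<bar> + \<bar>y j' - y j\<bar> \<le> sqrt 2 * dist u v"
    using complex_abs_le_norm[of "Complex (x i' - x i) (y j' - y j)"] uv
    by (simp add: pt_def dist_Pair_Pair dist_real_def cmod_def power2_commute)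
  then have "c * \<bar>x i' - x i\<bar> + c * \<bar>y j' - y j\<bar> \<le> c * sqrt 2 * dist u v"
    using mult_left_mono[OF _ assms(1)] by (fastforce simp: algebra_simps)
  with reach_trans[OF row column] have "reach E u v (c * sqrt 2 * dist u v)"
    unfolding uv by (rule reach_mono)
  then show "graph_dist E u v \<le> ereal (c * sqrt 2 * dist u v)"
    by (rule graph_dist_le_reach)
qed

end

locale grid_matching = grid +
  fixes K :: "grid_edge set"
  assumes K_odd: "K \<subseteq> odd_edges k m"
    and K_matching: "\<And>e f. e \<in> K \<Longrightarrow> f \<in> K \<Longrightarrow> meets e f \<Longrightarrow> e = f"
    and K_dominating: "\<And>e. e \<in> odd_edges k m - K \<Longrightarrow> \<exists>f\<in>K. meets e f \<and> edge_length f \<le> edge_length e"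
begin

definition kept :: "grid_edge set" where
  "kept = grid_edges k m - (odd_edges k m - K)"

definition G :: "point set set" where
  "G = geom_edge ` kept"

lemma kept_subset: "kept \<subseteq> grid_edges k m"
  by (auto simp: kept_def)

lemma K_subset_kept: "K \<subseteq> kept"
  using K_odd by (auto simp: kept_def odd_edges_def)

lemma kept_if_even_tail: "t \<in> grid_edges k m \<Longrightarrow> \<not> odd_vertex (tail t) \<Longrightarrow> t \<in> kept"
  by (simp add: kept_def odd_edges_def)

lemma kept_odd_tail_in_K: "t \<in> kept \<Longrightarrow> odd_vertex (tail t) \<Longrightarrow> t \<in> K"
  by (simp add: kept_def odd_edges_def)

lemma geometric_graph_G: "geometric_graph V G"
  unfolding G_def by (rule geometric_graph_subset[OF geometric_graph_grid]) (use kept_subset in blast)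

lemma plane_G: "plane G"
  unfolding G_def by (rule plane_subset[OF plane_grid]) (use kept_subset in blast)

lemma card_kept_at_vertex: "card {t \<in> kept. p \<in> ends t} \<le> 3"
proof -
  define out where "out = {t \<in> kept. tail t = p}"
  define inc where "inc = {t \<in> kept. head t = p}"
  have fin: "finite out" "finite inc"
    using finite_subset[OF kept_subset finite_grid_edges] by (simp_all add: out_def inc_def)
  have at_most_one: "card A \<le> 1" if "A \<subseteq> K" "finite A" "\<And>t. t \<in> A \<Longrightarrow> p \<in> ends t" for A
  proof -
    have "\<forall>a\<in>A. \<forall>b\<in>A. a = b" using that K_matching unfolding meets_def by blast
    then show ?thesis using card_le_Suc0_iff_eq[OF that(2)] by simp
  qed
  have "card out \<le> 1 \<or> card inc \<le> 1"
  proof (cases "odd_vertex p")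
    case True
    then have "out \<subseteq> K" unfolding out_def using kept_odd_tail_in_K by blast
    then have "card out \<le> 1" by (rule at_most_one) (use fin in \<open>simp_all add: out_def ends_def\<close>)
    then show ?thesis ..
  next
    case False
    then have "inc \<subseteq> K" unfolding inc_def using odd_vertex_head kept_odd_tail_in_K by blast
    then have "card inc \<le> 1" by (rule at_most_one) (use fin in \<open>simp_all add: inc_def ends_def\<close>)
    then show ?thesis ..
  qed
  moreover have "{t \<in> kept. p \<in> ends t} = out \<union> inc"
    by (auto simp: out_def inc_def ends_def)
  ultimately show ?thesis
    using card_Un_le[of out inc] card_tail_eq_le_2[of kept p] card_head_eq_le_2[of kept p]
    unfolding out_def inc_def by auto
qed

lemma max_degree_G: "max_degree_le V G 3"
  unfolding max_degree_le_def V_eq_pt_image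
proof
  fix v assume "v \<in> pt ` ({..<k} \<times> {..<m})"
  then obtain p where p: "p \<in> {..<k} \<times> {..<m}" "v = pt p" by blast
  have "{e \<in> G. v \<in> e} \<subseteq> geom_edge ` {t \<in> kept. p \<in> ends t}"
  proof
    fix e assume "e \<in> {e \<in> G. v \<in> e}"
    then obtain t where t: "t \<in> kept" "e = geom_edge t" "pt p \<in> geom_edge t"
      using p(2) by (auto simp: G_def)
    have "tail t \<in> {..<k} \<times> {..<m}" "head t \<in> {..<k} \<times> {..<m}"
      using ends_in_grid[OF subsetD[OF kept_subset t(1)]] by (simp_all add: ends_def)
    with t(3) have "p \<in> ends t"
      using pt_inj[OF p(1)] by (auto simp: geom_edge_def ends_def)
    with t show "e \<in> geom_edge ` {t \<in> kept. p \<in> ends t}" by blast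
  qed
  moreover have fin: "finite {t \<in> kept. p \<in> ends t}"
    using finite_subset[OF kept_subset finite_grid_edges] by simp
  ultimately have "card {e \<in> G. v \<in> e} \<le> card (geom_edge ` {t \<in> kept. p \<in> ends t})"
    by (intro card_mono) simp_all
  also have "\<dots> \<le> card {t \<in> kept. p \<in> ends t}"
    using fin by (rule card_image_le)
  also have "\<dots> \<le> 3"
    by (rule card_kept_at_vertex)
  finally show "degree G v \<le> 3"
    unfolding degree_def .
qed

lemma reach_kept: "t \<in> kept \<Longrightarrow> reach G (pt (tail t)) (pt (head t)) (edge_length t)"
  unfolding edge_length_def by (rule reach_edge) (simp add: G_def geom_edge_def)

lemma detour_around_cell:
  assumes t: "t \<in> odd_edges k m" and f: "f \<in> odd_edges k m" "f \<in> kept" and "t \<noteq> f" "meets t f"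
  shows "reach G (pt (tail t)) (pt (head t)) (edge_length t + 2 * edge_length f)"
  using t f(1) assms(4,5)
proof (cases rule: odd_edges_meet_cases)
  case (1 i j)
  have "Hor i (Suc j) \<in> kept" "Ver (Suc i) j \<in> kept"
    using t f 1 by (auto intro!: kept_if_even_tail simp: odd_edges_def odd_vertex_def)
  with f(2) 1 have "reach G (pt (i, j)) (pt (i, Suc j)) (edge_length f)"
    "reach G (pt (i, Suc j)) (pt (Suc i, Suc j)) (edge_length t)"
    "reach G (pt (Suc i, Suc j)) (pt (Suc i, j)) (edge_length f)"
    using reach_kept reach_sym[OF reach_kept] by fastforce+
  then have "reach G (pt (i, j)) (pt (Suc i, j)) (edge_length t + 2 * edge_length f)"
    by (rule reach_trans3) simp
  with 1 show ?thesis by simp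
next
  case (2 i j)
  have "Ver i j \<in> kept" "Hor i j \<in> kept"
    using t f 2 by (auto intro!: kept_if_even_tail simp: odd_edges_def odd_vertex_def)
  with f(2) 2 have "reach G (pt (i, Suc j)) (pt (i, j)) (edge_length f)"
    "reach G (pt (i, j)) (pt (Suc i, j)) (edge_length t)"
    "reach G (pt (Suc i, j)) (pt (Suc i, Suc j)) (edge_length f)"
    using reach_kept reach_sym[OF reach_kept] by fastforce+
  then have "reach G (pt (i, Suc j)) (pt (Suc i, Suc j)) (edge_length t + 2 * edge_length f)"
    by (rule reach_trans3) simp
  with 2 show ?thesis by simp
next
  case (3 i j)
  have "Ver (Suc i) j \<in> kept" "Hor i (Suc j) \<in> kept"
    using t f 3 by (auto intro!: kept_if_even_tail simp: odd_edges_def odd_vertex_def)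
  with f(2) 3 have "reach G (pt (i, j)) (pt (Suc i, j)) (edge_length f)"
    "reach G (pt (Suc i, j)) (pt (Suc i, Suc j)) (edge_length t)"
    "reach G (pt (Suc i, Suc j)) (pt (i, Suc j)) (edge_length f)"
    using reach_kept reach_sym[OF reach_kept] by fastforce+
  then have "reach G (pt (i, j)) (pt (i, Suc j)) (edge_length t + 2 * edge_length f)"
    by (rule reach_trans3) simp
  with 3 show ?thesis by simp
next
  case (4 i j)
  have "Hor i j \<in> kept" "Ver i j \<in> kept"
    using t f 4 by (auto intro!: kept_if_even_tail simp: odd_edges_def odd_vertex_def)
  with f(2) 4 have "reach G (pt (Suc i, j)) (pt (i, j)) (edge_length f)"
    "reach G (pt (i, j)) (pt (i, Suc j)) (edge_length t)"
    "reach G (pt (i, Suc j)) (pt (Suc i, Suc j)) (edge_length f)"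
    using reach_kept reach_sym[OF reach_kept] by fastforce+
  then have "reach G (pt (Suc i, j)) (pt (Suc i, Suc j)) (edge_length t + 2 * edge_length f)"
    by (rule reach_trans3) simp
  with 4 show ?thesis by simp
qed

lemma reach_grid_edge:
  assumes "t \<in> grid_edges k m"
  shows "reach G (pt (tail t)) (pt (head t)) (3 * edge_length t)"
proof (cases "t \<in> kept")
  case True
  then show ?thesis by (rule reach_mono[OF reach_kept]) (simp add: edge_length_def)
next
  case False
  with assms have t: "t \<in> odd_edges k m - K" by (simp add: kept_def)
  then obtain f where f: "f \<in> K" "meets t f" "edge_length f \<le> edge_length t"
    using K_dominating by blast
  from t f(1) have "t \<noteq> f" by blast
  with t f(1,2) K_odd K_subset_kept
  have "reach G (pt (tail t)) (pt (head t)) (edge_length t + 2 * edge_length f)"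
    by (intro detour_around_cell) auto
  then show ?thesis by (rule reach_mono) (use f(3) in simp)
qed

lemma stretch_G: "stretch_le V G (3 * sqrt 2)"
  using stretch_le_of_edge_stretch[of 3 G] reach_grid_edge by simp

end

lemma grid_spanner_exists:
  fixes x y :: "nat \<Rightarrow> real"
  assumes "strict_mono_on {..<k} x" "strict_mono_on {..<m} y"
  shows "\<exists>E. geometric_graph (grid_vertices (x ` {..<k}) (y ` {..<m})) E \<and> plane E
           \<and> max_degree_le (grid_vertices (x ` {..<k}) (y ` {..<m})) E 3
           \<and> stretch_le (grid_vertices (x ` {..<k}) (y ` {..<m})) E (3 * sqrt 2)"
proof -
  interpret grid x y k m
    using assms by unfold_locales
  have "finite (odd_edges k m)"
    using finite_grid_edges by (rule rev_finite_subset) (auto simp: odd_edges_def)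
  then have "\<exists>K\<subseteq>odd_edges k m. (\<forall>e\<in>K. \<forall>f\<in>K. meets e f \<longrightarrow> e = f)
      \<and> (\<forall>e\<in>odd_edges k m - K. \<exists>f\<in>K. meets e f \<and> edge_length f \<le> edge_length e)"
    by (rule greedy_matching_exists) (rule meets_refl, erule meets_sym)
  then obtain K where K: "K \<subseteq> odd_edges k m" "\<forall>e\<in>K. \<forall>f\<in>K. meets e f \<longrightarrow> e = f"
    "\<forall>e\<in>odd_edges k m - K. \<exists>f\<in>K. meets e f \<and> edge_length f \<le> edge_length e"
    by (elim exE conjE)
  interpret grid_matching x y k m K
  proof
    show "K \<subseteq> odd_edges k m" by (rule K(1))
    show "\<And>e f. e \<in> K \<Longrightarrow> f \<in> K \<Longrightarrow> meets e f \<Longrightarrow> e = f" using K(2) by blast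
    show "\<And>e. e \<in> odd_edges k m - K \<Longrightarrow> \<exists>f\<in>K. meets e f \<and> edge_length f \<le> edge_length e"
      using K(3) by blast
  qed
  show ?thesis
    by (intro exI[of _ G] conjI geometric_graph_G plane_G max_degree_G stretch_G)
qed

lemma finite_set_strict_enumeration:
  fixes X :: "'a::linorder set"
  assumes "finite X"
  obtains f :: "nat \<Rightarrow> 'a" and n :: nat where "strict_mono_on {..<n} f" "X = f ` {..<n}"
proof
  let ?xs = "sorted_list_of_set X"
  show "strict_mono_on {..<length ?xs} (nth ?xs)"
    by (rule strict_mono_onI) (simp add: sorted_wrt_nth_less)
  have "nth ?xs ` {..<length ?xs} = set ?xs"
    by (auto simp: in_set_conv_nth)
  with assms show "X = nth ?xs ` {..<length ?xs}"
    by simp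
qed

theorem theorem7:
  fixes X Y :: "real set"
  assumes "finite X" and "finite Y" and "X \<noteq> {}" and "Y \<noteq> {}"
  shows "\<exists>E. geometric_graph (grid_vertices X Y) E \<and> plane E
           \<and> max_degree_le (grid_vertices X Y) E 3
           \<and> stretch_le (grid_vertices X Y) E (3 * sqrt 2)"
proof -
  obtain x :: "nat \<Rightarrow> real" and k :: nat where x: "strict_mono_on {..<k} x" "X = x ` {..<k}"
    using assms(1) by (rule finite_set_strict_enumeration)
  obtain y :: "nat \<Rightarrow> real" and m :: nat where y: "strict_mono_on {..<m} y" "Y = y ` {..<m}"
    using assms(2) by (rule finite_set_strict_enumeration)
  show ?thesis
    unfolding x(2) y(2) by (rule grid_spanner_exists[OF x(1) y(1)])
qed

end
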